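(* Let $a,b\in\mathbb{R}$ with $a+b>-1$, and let $h_0\in\mathbb{R}$ with $h_0>a+1$ and $h_0>b+1$. Then $$\sum_{\ell=0}^{\infty}(1-2h)\,T_a(h)\,T_b(h)\Big|_{h=h_0+\ell}\;=\;-\frac{(a+h_0)(b+h_0)}{a+b+1}\,T_a(h_0)\,T_b(h_0)\;\equiv\;\mathcal{A}_{a,b}(h_0),$$ the series on the left being convergent.
   Context: For real $a$ and $h$, define $T_a(h)=\frac{1}{\Gamma(-a)^2}\frac{\Gamma(h-a-1)}{\Gamma(h+a+1)}$ (with $1/\Gamma(-a)^2=0$ when $a$ is a nonnegative integer). *)

theory Defs
  imports "HOL-Analysis.Analysis"
begin

text \<open>The reciprocal Gamma function rGamma is entire and vanishes exactly at the
  nonpositive integers, so rGamma(-a)^2 realises the convention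
  1/Gamma(-a)^2 = 0 for nonnegative integers a, and division by Gamma(h+a+1)
  is written as multiplication by rGamma(h+a+1).\<close>
definition T :: "real \<Rightarrow> real \<Rightarrow> real" where
  "T a h = (rGamma (- a))\<^sup>2 * Gamma (h - a - 1) * rGamma (h + a + 1)"

end

theory Submission
  imports Defs
begin

text \<open>The series telescopes. With
  \<open>A(h) = -(a+h)(b+h)/(a+b+1) \<cdot> T\<^sub>a(h) T\<^sub>b(h)\<close>, the shift relation
  \<open>(h+c+1) T\<^sub>c(h+1) = (h-c-1) T\<^sub>c(h)\<close> gives \<open>A(h) - A(h+1) = (1-2h) T\<^sub>a(h) T\<^sub>b(h)\<close>.
  Since \<open>(h+c) T\<^sub>c(h)\<close> is a constant times \<open>\<Gamma>(h-c-1)/\<Gamma>(h+c) \<sim> h\<^bsup>-2c-1\<^esup>\<close>,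
  \<open>A(h) = O(h\<^bsup>-2(a+b+1)\<^esup>)\<close> tends to zero, so the partial sums converge to \<open>A(h\<^sub>0)\<close>.\<close>

lemma T_plus1:
  assumes "h - c - 1 \<notin> \<int>\<^sub>\<le>\<^sub>0"
  shows "(h + c + 1) * T c (h + 1) = (h - c - 1) * T c h"
proof -
  have "Gamma (h + 1 - c - 1) = (h - c - 1) * Gamma (h - c - 1)"
    using Gamma_plus1[OF assms] by (simp add: algebra_simps)
  moreover have "(h + c + 1) * rGamma (h + 1 + c + 1) = rGamma (h + c + 1)"
    using rGamma_plus1[of "h + c + 1"] by (simp add: algebra_simps)
  moreover have "(h + c + 1) * T c (h + 1)
      = (rGamma (- c))\<^sup>2 * Gamma (h + 1 - c - 1) * ((h + c + 1) * rGamma (h + 1 + c + 1))"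
    unfolding T_def by (simp only: mult_ac)
  ultimately show ?thesis
    unfolding T_def by (simp only: mult_ac)
qed

lemma times_T_eq: "(h + c) * T c h = (rGamma (- c))\<^sup>2 * Gamma (h - c - 1) * rGamma (h + c)"
proof -
  have "(h + c) * T c h = (rGamma (- c))\<^sup>2 * Gamma (h - c - 1) * ((h + c) * rGamma (h + c + 1))"
    unfolding T_def by (simp add: algebra_simps)
  then show ?thesis by (simp only: rGamma_plus1)
qed

lemma Gamma_rGamma_shift_eq_Gamma_series':
  fixes x y :: real
  assumes "x > 0" "y > 0" "n > 0"
  shows "Gamma (x + real n) * rGamma (y + real n) * real n powr (y - x)
       = Gamma x * rGamma y * (Gamma_series' y n / Gamma_series' x n)"
proof -
  have x: "x \<notin> \<int>\<^sub>\<le>\<^sub>0" using assms by auto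
  have poch: "pochhammer x n > 0" "pochhammer y n > 0"
    using assms by (simp_all add: pochhammer_pos)
  have series: "Gamma_series' z n = fact (n - 1) * real n powr z / pochhammer z n" for z :: real
    using assms(3) by (simp add: Gamma_series'_def powr_def)
  have "Gamma (x + real n) = pochhammer x n * Gamma x"
    using pochhammer_Gamma[OF x, of n] Gamma_nonzero[OF x] by simp
  moreover have "rGamma (y + real n) = rGamma y / pochhammer y n"
    using pochhammer_rGamma[of y n] poch by (simp add: field_simps)
  ultimately show ?thesis
    using poch assms(3) by (simp add: series powr_diff field_simps)
qed

lemma Gamma_rGamma_shift_asymptotic:
  fixes x y :: real
  assumes "x > 0" "y > 0"
  shows "(\<lambda>n. Gamma (x + real n) * rGamma (y + real n) * real n powr (y - x)) \<longlonglongrightarrow> 1"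
proof -
  have x: "x \<notin> \<int>\<^sub>\<le>\<^sub>0" and y: "y \<notin> \<int>\<^sub>\<le>\<^sub>0" using assms by auto
  have "(\<lambda>n. Gamma x * rGamma y * (Gamma_series' y n / Gamma_series' x n))
          \<longlonglongrightarrow> Gamma x * rGamma y * (Gamma y / Gamma x)"
    using x by (intro tendsto_mult tendsto_const tendsto_divide Gamma_series'_LIMSEQ)
      (simp add: Gamma_eq_zero_iff)
  moreover have "Gamma x * rGamma y * (Gamma y / Gamma x) = 1"
    using x y by (simp add: rGamma_inverse_Gamma Gamma_eq_zero_iff)
  ultimately have "(\<lambda>n. Gamma x * rGamma y * (Gamma_series' y n / Gamma_series' x n)) \<longlonglongrightarrow> 1"
    by simp
  moreover have "\<forall>\<^sub>F n in sequentially. Gamma x * rGamma y * (Gamma_series' y n / Gamma_series' x n)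
      = Gamma (x + real n) * rGamma (y + real n) * real n powr (y - x)"
    using eventually_gt_at_top[of 0]
    by eventually_elim (simp add: Gamma_rGamma_shift_eq_Gamma_series' assms)
  ultimately show ?thesis by (rule Lim_transform_eventually)
qed

definition A :: "real \<Rightarrow> real \<Rightarrow> real \<Rightarrow> real" where
  "A a b h = - ((a + h) * (b + h) / (a + b + 1)) * T a h * T b h"

lemma times_A_eq:
  assumes "a + b + 1 \<noteq> 0"
  shows "(a + b + 1) * A a b h = - ((a + h) * T a h) * ((b + h) * T b h)"
proof -
  have "(a + b + 1) * A a b h = - ((a + b + 1) / (a + b + 1)) * ((a + h) * (b + h)) * T a h * T b h"
    unfolding A_def by (simp add: mult_ac)
  then show ?thesis using assms by simp
qed

lemma A_diff:
  assumes "h - a - 1 \<notin> \<int>\<^sub>\<le>\<^sub>0" "h - b - 1 \<notin> \<int>\<^sub>\<le>\<^sub>0" "a + b + 1 \<noteq> 0"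
  shows "A a b h - A a b (h + 1) = (1 - 2 * h) * T a h * T b h"
proof -
  have "(a + b + 1) * A a b (h + 1) = - ((h + a + 1) * T a (h + 1)) * ((h + b + 1) * T b (h + 1))"
    using times_A_eq[OF assms(3), of "h + 1"] by (simp only: add_ac)
  also have "\<dots> = - ((h - a - 1) * T a h) * ((h - b - 1) * T b h)"
    unfolding T_plus1[OF assms(1)] T_plus1[OF assms(2)] ..
  finally have A_succ: "(a + b + 1) * A a b (h + 1) = - ((h - a - 1) * T a h) * ((h - b - 1) * T b h)" .
  have "(a + b + 1) * (A a b h - A a b (h + 1)) = (a + b + 1) * ((1 - 2 * h) * T a h * T b h)"
    unfolding right_diff_distrib times_A_eq[OF assms(3), of h] A_succ by (simp add: algebra_simps)
  then show ?thesis
    by (rule mult_left_cancel[OF assms(3), THEN iffD1])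
qed

lemma A_shift_LIMSEQ_0:
  assumes "a + b > -1" "h0 > a + 1" "h0 > b + 1"
  shows "(\<lambda>n. A a b (h0 + real n)) \<longlonglongrightarrow> 0"
proof -
  define G where "G c n = Gamma (h0 - c - 1 + real n) * rGamma (h0 + c + real n)
      * real n powr ((h0 + c) - (h0 - c - 1))" for c n
  define K where "K = - (rGamma (- a))\<^sup>2 * (rGamma (- b))\<^sup>2"
  have G_lim: "(\<lambda>n. G c n) \<longlonglongrightarrow> 1" if "h0 > c + 1" "h0 + c > 0" for c
    unfolding G_def using that by (intro Gamma_rGamma_shift_asymptotic) auto
  have "(\<lambda>n. K * G a n * G b n * real n powr (- 2 * (a + b + 1))) \<longlonglongrightarrow> K * 1 * 1 * 0"
    using assms
    by (intro tendsto_mult tendsto_const G_lim tendsto_neg_powr filterlim_real_sequentially) auto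
  moreover have "\<forall>\<^sub>F n in sequentially.
      K * G a n * G b n * real n powr (- 2 * (a + b + 1)) = (a + b + 1) * A a b (h0 + real n)"
    using eventually_gt_at_top[of 0]
  proof eventually_elim
    case (elim n)
    have "real n powr ((h0 + a) - (h0 - a - 1)) * real n powr ((h0 + b) - (h0 - b - 1))
        * real n powr (- 2 * (a + b + 1)) = 1"
      using elim by (simp flip: powr_add add: algebra_simps)
    then have "K * G a n * G b n * real n powr (- 2 * (a + b + 1))
        = K * (Gamma (h0 - a - 1 + real n) * rGamma (h0 + a + real n))
            * (Gamma (h0 - b - 1 + real n) * rGamma (h0 + b + real n))"
      unfolding G_def by (simp add: mult_ac)
    also have "\<dots> = - ((h0 + real n + a) * T a (h0 + real n)) * ((h0 + real n + b) * T b (h0 + real n))"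
      unfolding K_def times_T_eq by (simp add: algebra_simps)
    also have "\<dots> = (a + b + 1) * A a b (h0 + real n)"
      using times_A_eq[of a b "h0 + real n"] assms(1) by (simp add: add_ac)
    finally show ?case .
  qed
  ultimately have "(\<lambda>n. (a + b + 1) * A a b (h0 + real n)) \<longlonglongrightarrow> (a + b + 1) * 0"
    by (simp add: tendsto_cong)
  then show ?thesis
    using assms(1) by (simp add: tendsto_mult_left_iff)
qed

theorem mainTheorem1:
  fixes a b h0 :: real
  assumes "a + b > -1" and "h0 > a + 1" and "h0 > b + 1"
  shows "(\<lambda>l::nat. let h = h0 + real l in (1 - 2 * h) * T a h * T b h)
           sums (- ((a + h0) * (b + h0) / (a + b + 1)) * T a h0 * T b h0)"
proof -
  have "(\<lambda>l. A a b (h0 + real l) - A a b (h0 + real (Suc l))) sums (A a b (h0 + real 0) - 0)"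
    by (rule telescope_sums'[OF A_shift_LIMSEQ_0[OF assms]])
  moreover have "A a b (h0 + real l) - A a b (h0 + real (Suc l))
      = (let h = h0 + real l in (1 - 2 * h) * T a h * T b h)" for l
  proof -
    have "h0 + real l - a - 1 \<notin> \<int>\<^sub>\<le>\<^sub>0" "h0 + real l - b - 1 \<notin> \<int>\<^sub>\<le>\<^sub>0" "a + b + 1 \<noteq> 0"
      using assms by auto
    from A_diff[OF this] show ?thesis by (simp add: Let_def add_ac)
  qed
  ultimately show ?thesis by (simp add: A_def)
qed

end
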